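(* For all pairs of states $\rho,\sigma$, $\lambda(\rho\otimes\sigma)=\max\{\lambda(\rho),\lambda(\sigma)\}$.
   Context: Fixed computational basis (product basis for tensor products); $\Delta$ the dephasing map; $R^\rho=\Delta(\rho)^{-1/2}\rho\Delta(\rho)^{-1/2}$ (inverse on the support). For a $d$-dimensional state, $\lambda(\rho)=\max\{|R^\rho_{ij}|:1\le i<j\le d,\ |R^\rho_{ij}|<1\}$, with $\lambda(\rho)=0$ if this set is empty (for $\rho\otimes\sigma$ the indices run over pairs of product basis labels, ordered arbitrarily). *)

theory Defs
  imports Complex_Main
begin

text \<open>A d x d complex matrix is represented as a function nat => nat => complex;
  only the entries with indices below d are meaningful. Computational basis
  labels are 0..d-1.\<close>

definition is_state :: "nat \<Rightarrow> (nat \<Rightarrow> nat \<Rightarrow> complex) \<Rightarrow> bool" where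
  "is_state d \<rho> \<longleftrightarrow>
     (\<forall>i<d. \<forall>j<d. \<rho> j i = cnj (\<rho> i j)) \<and>
     (\<forall>v :: nat \<Rightarrow> complex. 0 \<le> Re (\<Sum>i<d. \<Sum>j<d. cnj (v i) * \<rho> i j * v j)) \<and>
     (\<Sum>i<d. \<rho> i i) = 1"

text \<open>Diagonal entries of Delta(rho)^(-1/2), the inverse taken on the support.\<close>
definition deph_inv_sqrt :: "(nat \<Rightarrow> nat \<Rightarrow> complex) \<Rightarrow> nat \<Rightarrow> complex" where
  "deph_inv_sqrt \<rho> i = (if Re (\<rho> i i) > 0 then complex_of_real (1 / sqrt (Re (\<rho> i i))) else 0)"

text \<open>R^rho = Delta(rho)^(-1/2) rho Delta(rho)^(-1/2) (product with diagonal matrices).\<close>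
definition Rmat :: "(nat \<Rightarrow> nat \<Rightarrow> complex) \<Rightarrow> nat \<Rightarrow> nat \<Rightarrow> complex" where
  "Rmat \<rho> i j = deph_inv_sqrt \<rho> i * \<rho> i j * deph_inv_sqrt \<rho> j"

definition lam :: "nat \<Rightarrow> (nat \<Rightarrow> nat \<Rightarrow> complex) \<Rightarrow> real" where
  "lam d \<rho> = (let S = {cmod (Rmat \<rho> i j) | i j. i < j \<and> j < d \<and> cmod (Rmat \<rho> i j) < 1}
              in if S = {} then 0 else Max S)"

text \<open>Tensor product in the product basis; the product label (i,k), i<d1, k<d2,
  is encoded as i*d2+k (lexicographic ordering of the product labels).\<close>
definition tensor :: "nat \<Rightarrow> (nat \<Rightarrow> nat \<Rightarrow> complex) \<Rightarrow> (nat \<Rightarrow> nat \<Rightarrow> complex) \<Rightarrow> nat \<Rightarrow> nat \<Rightarrow> complex" where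
  "tensor d2 \<rho> \<sigma> a b = \<rho> (a div d2) (b div d2) * \<sigma> (a mod d2) (b mod d2)"

end

theory Submission
  imports Defs "HOL-Library.Set_Algebras"
begin

(* The moduli of the entries of R for a tensor product are exactly the products u * w of
   moduli of entries of the factors' R matrices, all of which lie in [0, 1].  A state has a
   positive diagonal entry, where |R| = 1, so 1 occurs among the moduli of each factor.  Hence
   a product below 1 is bounded by a factor below 1, and every value below 1 of a factor
   reappears as its product with 1: the largest value below 1 of the product set is the larger
   of those of the factors.  Restricting lambda to pairs i < j is harmless, because |R| is
   symmetric and its diagonal entries are 0 or 1. *)

definition max_below_one :: "real set \<Rightarrow> real" where
  "max_below_one A = Max (insert 0 {x \<in> A. x < 1})"

lemma max_below_one_ge:
  "finite A \<Longrightarrow> x \<in> A \<Longrightarrow> x < 1 \<Longrightarrow> x \<le> max_below_one A"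
  unfolding max_below_one_def by (intro Max_ge) auto

lemma max_below_one_nonneg: "finite A \<Longrightarrow> 0 \<le> max_below_one A"
  unfolding max_below_one_def by (intro Max_ge) auto

lemma max_below_one_le:
  "finite A \<Longrightarrow> 0 \<le> M \<Longrightarrow> (\<And>x. x \<in> A \<Longrightarrow> x < 1 \<Longrightarrow> x \<le> M) \<Longrightarrow> max_below_one A \<le> M"
  unfolding max_below_one_def by (intro Max.boundedI) auto

lemma max_below_one_mono:
  "finite B \<Longrightarrow> A \<subseteq> B \<Longrightarrow> max_below_one A \<le> max_below_one B"
  unfolding max_below_one_def by (intro Max_mono) auto

lemma max_below_one_set_times:
  fixes A B :: "real set"
  assumes "finite A" "finite B" "A \<subseteq> {0..1}" "B \<subseteq> {0..1}" "1 \<in> A" "1 \<in> B"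
  shows "max_below_one (A * B) = max (max_below_one A) (max_below_one B)"
proof -
  have fin: "finite (A * B)" using assms(1,2) by (simp add: set_times_image)
  have "A \<subseteq> A * B" "B \<subseteq> A * B"
    using set_times_intro[OF _ \<open>1 \<in> B\<close>, of _ A] set_times_intro[OF \<open>1 \<in> A\<close>, of _ B] by force+
  then have "max (max_below_one A) (max_below_one B) \<le> max_below_one (A * B)"
    using fin by (simp add: max_below_one_mono)
  moreover have "max_below_one (A * B) \<le> max (max_below_one A) (max_below_one B)"
  proof (rule max_below_one_le[OF fin])
    show "0 \<le> max (max_below_one A) (max_below_one B)"
      using max_below_one_nonneg[OF assms(1)] by linarith
    fix x assume x: "x \<in> A * B" "x < 1"
    then obtain u w where uw: "u \<in> A" "w \<in> B" "x = u * w"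
      by (auto simp: set_times_def)
    have u: "0 \<le> u" "u \<le> 1" and w: "0 \<le> w" "w \<le> 1" using uw assms(3,4) by auto
    show "x \<le> max (max_below_one A) (max_below_one B)"
    proof (cases "u < 1")
      case True
      then have "x \<le> u" using uw(3) u w by (simp add: mult_left_le)
      then show ?thesis using max_below_one_ge[OF assms(1) uw(1) True] by linarith
    next
      case False
      then have "x = w" using uw(3) u by simp
      then show ?thesis using max_below_one_ge[OF assms(2) uw(2)] x(2) by simp
    qed
  qed
  ultimately show ?thesis by linarith
qed

definition is_hermitian :: "nat \<Rightarrow> (nat \<Rightarrow> nat \<Rightarrow> complex) \<Rightarrow> bool" where
  "is_hermitian d \<rho> \<longleftrightarrow> (\<forall>i<d. \<forall>j<d. \<rho> j i = cnj (\<rho> i j))"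

lemma hermitian_diag_real:
  assumes "is_hermitian d \<rho>" "i < d"
  shows "\<rho> i i = of_real (Re (\<rho> i i))"
proof -
  have "\<rho> i i = cnj (\<rho> i i)" using assms unfolding is_hermitian_def by blast
  then have "Im (\<rho> i i) = Im (cnj (\<rho> i i))" by (rule arg_cong)
  then show ?thesis by (simp add: complex_eq_iff)
qed

lemma norm_deph_inv_sqrt:
  "cmod (deph_inv_sqrt \<rho> i) = (if 0 < Re (\<rho> i i) then 1 / sqrt (Re (\<rho> i i)) else 0)"
  by (simp add: deph_inv_sqrt_def norm_divide)

lemma norm_Rmat_commute:
  assumes "is_hermitian d \<rho>" "i < d" "j < d"
  shows "cmod (Rmat \<rho> j i) = cmod (Rmat \<rho> i j)"
proof -
  have "\<rho> j i = cnj (\<rho> i j)" using assms unfolding is_hermitian_def by blast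
  then show ?thesis by (simp add: Rmat_def norm_mult)
qed

lemma norm_Rmat_diag:
  assumes "is_hermitian d \<rho>" "i < d"
  shows "cmod (Rmat \<rho> i i) = (if 0 < Re (\<rho> i i) then 1 else 0)"
proof -
  have "cmod (\<rho> i i) = \<bar>Re (\<rho> i i)\<bar>"
    using arg_cong[OF hermitian_diag_real[OF assms], of cmod] by simp
  then show ?thesis by (simp add: Rmat_def norm_mult norm_deph_inv_sqrt)
qed

lemma is_state_hermitian: "is_state d \<rho> \<Longrightarrow> is_hermitian d \<rho>"
  unfolding is_state_def is_hermitian_def by blast

lemma is_state_psd: "is_state d \<rho> \<Longrightarrow> 0 \<le> Re (\<Sum>i<d. \<Sum>j<d. cnj (v i) * \<rho> i j * v j)"
  unfolding is_state_def by blast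

lemma quadratic_form_supported:
  fixes \<rho> :: "'a \<Rightarrow> 'a \<Rightarrow> complex"
  assumes "finite A" "S \<subseteq> A" "\<And>i. i \<in> A - S \<Longrightarrow> v i = 0"
  shows "(\<Sum>i\<in>A. \<Sum>j\<in>A. cnj (v i) * \<rho> i j * v j) = (\<Sum>i\<in>S. \<Sum>j\<in>S. cnj (v i) * \<rho> i j * v j)"
proof -
  have "(\<Sum>j\<in>A. cnj (v i) * \<rho> i j * v j) = (\<Sum>j\<in>S. cnj (v i) * \<rho> i j * v j)" for i
    using assms by (intro sum.mono_neutral_right) auto
  moreover have "(\<Sum>i\<in>A. \<Sum>j\<in>S. cnj (v i) * \<rho> i j * v j) = (\<Sum>i\<in>S. \<Sum>j\<in>S. cnj (v i) * \<rho> i j * v j)"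
    using assms by (intro sum.mono_neutral_right) auto
  ultimately show ?thesis by simp
qed

lemma state_diag_nonneg:
  assumes "is_state d \<rho>" "i < d"
  shows "0 \<le> Re (\<rho> i i)"
proof -
  let ?e = "\<lambda>n. if n = i then 1 else 0 :: complex"
  have "(\<Sum>i'<d. \<Sum>j'<d. cnj (?e i') * \<rho> i' j' * ?e j') = \<rho> i i"
    using assms(2) by (subst quadratic_form_supported[where S = "{i}"]) auto
  then show ?thesis using is_state_psd[OF assms(1), of ?e] by simp
qed

lemma state_has_positive_diag:
  assumes "is_state d \<rho>"
  obtains k where "k < d" "0 < Re (\<rho> k k)"
proof (rule ccontr)
  assume "\<not> thesis"
  with that have "\<forall>k<d. Re (\<rho> k k) \<le> 0" by (meson not_less)
  then have "(\<Sum>k<d. Re (\<rho> k k)) \<le> 0" by (intro sum_nonpos) auto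
  moreover have "(\<Sum>k<d. Re (\<rho> k k)) = 1"
    using assms unfolding is_state_def by (metis Re_sum one_complex.sel(1))
  ultimately show False by simp
qed

lemma state_offdiag_bound:
  assumes "is_state d \<rho>" "i < d" "j < d" "0 < Re (\<rho> i i)"
  shows "(cmod (\<rho> i j))\<^sup>2 \<le> Re (\<rho> i i) * Re (\<rho> j j)"
proof (cases "i = j")
  case True
  have "cmod (\<rho> i i) = Re (\<rho> i i)"
    using arg_cong[OF hermitian_diag_real[OF is_state_hermitian[OF assms(1)] assms(2)], of cmod] assms
    by simp
  then show ?thesis using True by (simp add: power2_eq_square)
next
  case False
  define p q z where "p = Re (\<rho> i i)" and "q = Re (\<rho> j j)" and "z = \<rho> i j"
  have diag: "\<rho> i i = of_real p" "\<rho> j j = of_real q"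
    using hermitian_diag_real[OF is_state_hermitian] assms by (simp_all add: p_def q_def)
  have conj: "\<rho> j i = cnj z"
    using assms is_state_hermitian unfolding is_hermitian_def z_def by blast
  define v where "v = (\<lambda>n. if n = i then - z else if n = j then of_real p else 0)"
  have "(\<Sum>i'<d. \<Sum>j'<d. cnj (v i') * \<rho> i' j' * v j')
      = cnj z * of_real p * z - cnj z * z * of_real p - of_real p * cnj z * z
        + of_real p * of_real q * of_real p"
    using assms(2,3) False
    by (subst quadratic_form_supported[where S = "{i, j}"]) (auto simp: v_def diag conj z_def)
  also have "\<dots> = of_real (p * (p * q - (cmod z)\<^sup>2))"
    using complex_norm_square[of z] by (simp add: algebra_simps)
  finally have "0 \<le> p * (p * q - (cmod z)\<^sup>2)"
    using is_state_psd[OF assms(1), of v] by simp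
  then show ?thesis using assms(4) by (simp add: p_def q_def z_def zero_le_mult_iff)
qed

lemma norm_Rmat_le_one:
  assumes "is_state d \<rho>" "i < d" "j < d"
  shows "cmod (Rmat \<rho> i j) \<le> 1"
proof (cases "0 < Re (\<rho> i i) \<and> 0 < Re (\<rho> j j)")
  case True
  then have "(cmod (\<rho> i j))\<^sup>2 \<le> (sqrt (Re (\<rho> i i)) * sqrt (Re (\<rho> j j)))\<^sup>2"
    using state_offdiag_bound[OF assms] by (simp add: power_mult_distrib)
  then have "cmod (\<rho> i j) \<le> sqrt (Re (\<rho> i i)) * sqrt (Re (\<rho> j j))"
    by (rule power2_le_imp_le) (use True in simp)
  with True show ?thesis by (simp add: Rmat_def norm_mult norm_deph_inv_sqrt divide_simps)
qed (auto simp: Rmat_def norm_mult norm_deph_inv_sqrt)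

lemma index_pair_less:
  fixes i k d1 d2 :: nat
  assumes "i < d1" "k < d2"
  shows "i * d2 + k < d1 * d2"
proof -
  have "i * d2 + k < Suc i * d2" using assms(2) by simp
  also have "\<dots> \<le> d1 * d2" using assms(1) by (intro mult_right_mono) auto
  finally show ?thesis .
qed

lemma index_pair_decompose:
  fixes a d1 d2 :: nat
  assumes "a < d1 * d2"
  obtains i k where "i < d1" "k < d2" "a = i * d2 + k"
proof
  show "a div d2 < d1" using assms by (simp add: less_mult_imp_div_less)
  show "a mod d2 < d2" using assms by (cases "d2 = 0") auto
qed simp

lemma is_hermitian_tensor:
  assumes "is_hermitian d1 \<rho>" "is_hermitian d2 \<sigma>"
  shows "is_hermitian (d1 * d2) (tensor d2 \<rho> \<sigma>)"
  unfolding is_hermitian_def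
proof (intro allI impI)
  fix a b assume "a < d1 * d2" "b < d1 * d2"
  then obtain i k j l where ik: "i < d1" "k < d2" "a = i * d2 + k"
    and jl: "j < d1" "l < d2" "b = j * d2 + l"
    by (metis index_pair_decompose)
  have "\<rho> j i = cnj (\<rho> i j)" "\<sigma> l k = cnj (\<sigma> k l)"
    using assms ik jl unfolding is_hermitian_def by blast+
  then show "tensor d2 \<rho> \<sigma> b a = cnj (tensor d2 \<rho> \<sigma> a b)"
    using ik jl by (simp add: tensor_def)
qed

lemma deph_inv_sqrt_tensor:
  assumes "is_state d1 \<rho>" "is_state d2 \<sigma>" "i < d1" "k < d2"
  shows "deph_inv_sqrt (tensor d2 \<rho> \<sigma>) (i * d2 + k) = deph_inv_sqrt \<rho> i * deph_inv_sqrt \<sigma> k"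
proof -
  define p q where "p = Re (\<rho> i i)" and "q = Re (\<sigma> k k)"
  have diag: "tensor d2 \<rho> \<sigma> (i * d2 + k) (i * d2 + k) = of_real (p * q)"
    using hermitian_diag_real[OF is_state_hermitian[OF assms(1)] assms(3)]
      hermitian_diag_real[OF is_state_hermitian[OF assms(2)] assms(4)] assms(4)
    by (simp add: tensor_def p_def q_def)
  have "0 \<le> p" "0 \<le> q"
    using state_diag_nonneg assms unfolding p_def q_def by blast+
  then have "0 < p * q \<longleftrightarrow> 0 < p \<and> 0 < q"
    by (auto simp: zero_less_mult_iff)
  then show ?thesis
    by (simp add: deph_inv_sqrt_def diag flip: p_def q_def) (simp add: real_sqrt_mult)
qed

lemma Rmat_tensor:
  assumes "is_state d1 \<rho>" "is_state d2 \<sigma>" "i < d1" "k < d2" "j < d1" "l < d2"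
  shows "Rmat (tensor d2 \<rho> \<sigma>) (i * d2 + k) (j * d2 + l) = Rmat \<rho> i j * Rmat \<sigma> k l"
  unfolding Rmat_def deph_inv_sqrt_tensor[OF assms(1-4)] deph_inv_sqrt_tensor[OF assms(1,2,5,6)]
  using assms(4,6) by (simp add: tensor_def algebra_simps)

definition Rmat_norms :: "nat \<Rightarrow> (nat \<Rightarrow> nat \<Rightarrow> complex) \<Rightarrow> real set" where
  "Rmat_norms d \<rho> = (\<lambda>(i, j). cmod (Rmat \<rho> i j)) ` ({..<d} \<times> {..<d})"

lemma finite_Rmat_norms: "finite (Rmat_norms d \<rho>)"
  by (simp add: Rmat_norms_def)

lemma Rmat_norms_subset: "is_state d \<rho> \<Longrightarrow> Rmat_norms d \<rho> \<subseteq> {0..1}"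
  by (auto simp: Rmat_norms_def norm_Rmat_le_one)

lemma one_in_Rmat_norms:
  assumes "is_state d \<rho>"
  shows "1 \<in> Rmat_norms d \<rho>"
proof -
  obtain k where k: "k < d" "0 < Re (\<rho> k k)" using state_has_positive_diag[OF assms] .
  then have "cmod (Rmat \<rho> k k) = 1" using norm_Rmat_diag[OF is_state_hermitian[OF assms]] by simp
  then show ?thesis using k(1) unfolding Rmat_norms_def by (force intro: image_eqI[where x = "(k, k)"])
qed

lemma Rmat_norms_tensor:
  assumes "is_state d1 \<rho>" "is_state d2 \<sigma>"
  shows "Rmat_norms (d1 * d2) (tensor d2 \<rho> \<sigma>) = Rmat_norms d1 \<rho> * Rmat_norms d2 \<sigma>"
proof (intro equalityI subsetI)
  fix x assume "x \<in> Rmat_norms (d1 * d2) (tensor d2 \<rho> \<sigma>)"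
  then obtain a b where "a < d1 * d2" "b < d1 * d2" "x = cmod (Rmat (tensor d2 \<rho> \<sigma>) a b)"
    by (auto simp: Rmat_norms_def)
  moreover obtain i k where "i < d1" "k < d2" "a = i * d2 + k"
    using index_pair_decompose[OF \<open>a < d1 * d2\<close>] .
  moreover obtain j l where "j < d1" "l < d2" "b = j * d2 + l"
    using index_pair_decompose[OF \<open>b < d1 * d2\<close>] .
  ultimately show "x \<in> Rmat_norms d1 \<rho> * Rmat_norms d2 \<sigma>"
    by (auto simp: Rmat_tensor[OF assms] norm_mult Rmat_norms_def)
next
  fix x assume "x \<in> Rmat_norms d1 \<rho> * Rmat_norms d2 \<sigma>"
  then obtain i j k l where "i < d1" "j < d1" "k < d2" "l < d2"
      "x = cmod (Rmat \<rho> i j) * cmod (Rmat \<sigma> k l)"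
    by (auto simp: set_times_def Rmat_norms_def)
  then have "x = cmod (Rmat (tensor d2 \<rho> \<sigma>) (i * d2 + k) (j * d2 + l))"
    by (simp add: Rmat_tensor[OF assms] norm_mult)
  then show "x \<in> Rmat_norms (d1 * d2) (tensor d2 \<rho> \<sigma>)"
    unfolding Rmat_norms_def using index_pair_less \<open>i < d1\<close> \<open>j < d1\<close> \<open>k < d2\<close> \<open>l < d2\<close>
    by (force intro: image_eqI[where x = "(i * d2 + k, j * d2 + l)"])
qed

lemma lam_eq_max_below_one:
  assumes "is_hermitian d \<rho>"
  shows "lam d \<rho> = max_below_one (Rmat_norms d \<rho>)"
proof -
  define S where "S = {cmod (Rmat \<rho> i j) | i j. i < j \<and> j < d \<and> cmod (Rmat \<rho> i j) < 1}"
  have "finite S"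
    by (rule finite_subset[OF _ finite_Rmat_norms[of d \<rho>]]) (auto simp: S_def Rmat_norms_def)
  have "Max (insert 0 S) = (if S = {} then 0 else Max S)"
  proof (cases "S = {}")
    case False
    then have "0 \<le> Max S" using Max_in[OF \<open>finite S\<close>] by (force simp: S_def)
    then show ?thesis using False \<open>finite S\<close> by simp
  qed simp
  then have "lam d \<rho> = Max (insert 0 S)"
    by (simp only: lam_def S_def Let_def)
  \<comment> \<open>the diagonal of R contributes only 0 and 1, and its norms are symmetric\<close>
  also have "insert 0 S = insert 0 {x \<in> Rmat_norms d \<rho>. x < 1}"
  proof (intro equalityI subsetI)
    fix x assume "x \<in> insert 0 {x \<in> Rmat_norms d \<rho>. x < 1}"
    then consider (zero) "x = 0"
      | (entry) i j where "i < d" "j < d" "x = cmod (Rmat \<rho> i j)" "x < 1"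
      by (auto simp: Rmat_norms_def)
    then show "x \<in> insert 0 S"
    proof cases
      case (entry i j)
      consider (lt) "i < j" | (gt) "j < i" | (eq) "i = j" by linarith
      then show ?thesis
      proof cases
        case lt
        then show ?thesis using entry unfolding S_def by blast
      next
        case gt
        then have "x = cmod (Rmat \<rho> j i)" using entry norm_Rmat_commute[OF assms] by simp
        then show ?thesis using entry gt unfolding S_def by blast
      next
        case eq
        then have "x = 0" using entry norm_Rmat_diag[OF assms, of i] by (simp split: if_splits)
        then show ?thesis by simp
      qed
    qed simp
  qed (auto simp: S_def Rmat_norms_def)
  finally show ?thesis by (simp add: max_below_one_def)
qed

theorem lemma6:
  fixes \<rho> \<sigma> :: "nat \<Rightarrow> nat \<Rightarrow> complex" and d1 d2 :: nat
  assumes "is_state d1 \<rho>" and "is_state d2 \<sigma>"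
  shows "lam (d1 * d2) (tensor d2 \<rho> \<sigma>) = max (lam d1 \<rho>) (lam d2 \<sigma>)"
proof -
  have "is_hermitian (d1 * d2) (tensor d2 \<rho> \<sigma>)"
    using is_hermitian_tensor is_state_hermitian assms by blast
  then have "lam (d1 * d2) (tensor d2 \<rho> \<sigma>) = max_below_one (Rmat_norms d1 \<rho> * Rmat_norms d2 \<sigma>)"
    by (simp add: lam_eq_max_below_one Rmat_norms_tensor assms)
  also have "\<dots> = max (lam d1 \<rho>) (lam d2 \<sigma>)"
    using assms by (simp add: max_below_one_set_times finite_Rmat_norms Rmat_norms_subset
        one_in_Rmat_norms lam_eq_max_below_one is_state_hermitian)
  finally show ?thesis .
qed

end
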